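(* Let $\{\mu_n\}_{n\ge0}$ be a consistent family of (possibly infinite) measures, $\mu_n$ on $(\Omega_n,\mathcal{B}_n)$. If for some $n_0$ the measure $\mu_{n_0}$ is $\sigma$-finite, then there exists a unique $\sigma$-additive measure $\bar\mu$ on $(\Omega,\mathcal{B})$ such that $\pi_{V_n}(\bar\mu)=\mu_n$ for all $n$.
   Context: Let $\Im^k=(V,L)$ be the Cayley tree of order $k\ge1$, with vertices enumerated as $V=\{x_0,x_1,\dots\}$. Let $\Phi$ be a finite or countably infinite set, $\Omega=\Phi^V$ with metric $\rho(\sigma,\sigma')=\sum_{n\ge0}2^{-n}\mathbf{1}_{\{\sigma(x_n)\ne\sigma'(x_n)\}}$ and Borel $\sigma$-field $\mathcal{B}$. Fix $x^0\in V$, let $d$ be the graph distance, $V_n=\{x\in V: d(x,x^0)\le n\}$, $\Omega_n=\Phi^{V_n}$ (countable, discrete) with $\mathcal{B}_n$ its power set, and $\pi_n:\Omega\to\Omega_n$, $\pi_n(\sigma)=\sigma|_{V_n}$. Projections of measures: $[\pi_{V_i}(\nu)](B)=\nu\{\sigma\in\Omega_j:\sigma|_{V_i}\in B\}$ for $\nu$ on $\mathcal{B}_j$, $i<j$, and $[\pi_{V_n}(\mu)](B)=\mu(\pi_n^{-1}(B))$ for $\mu$ on $\mathcal{B}$. Consistency means $\pi_{V_i}(\mu_j)=\mu_i$ for all $i<j$. *)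

theory Defs
  imports "HOL-Analysis.Analysis" "HOL-Library.Countable"
begin

text \<open>A graph on the vertex type 'v is given by a symmetric irreflexive adjacency relation E.\<close>

definition is_cycle :: "('v \<Rightarrow> 'v \<Rightarrow> bool) \<Rightarrow> 'v list \<Rightarrow> bool" where
  "is_cycle E xs \<longleftrightarrow> length xs \<ge> 3 \<and> distinct xs
     \<and> (\<forall>i. Suc i < length xs \<longrightarrow> E (xs ! i) (xs ! Suc i))
     \<and> E (last xs) (hd xs)"

definition cayley_tree :: "nat \<Rightarrow> ('v \<Rightarrow> 'v \<Rightarrow> bool) \<Rightarrow> bool" where
  "cayley_tree k E \<longleftrightarrow>
     (\<forall>x y. E x y \<longrightarrow> E y x) \<and> (\<forall>x. \<not> E x x)
     \<and> (\<forall>x. finite {y. E x y} \<and> card {y. E x y} = k + 1)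
     \<and> (\<forall>x y. E\<^sup>*\<^sup>* x y)
     \<and> (\<nexists>xs. is_cycle E xs)"

definition gdist :: "('v \<Rightarrow> 'v \<Rightarrow> bool) \<Rightarrow> 'v \<Rightarrow> 'v \<Rightarrow> nat" where
  "gdist E x y = (LEAST n. (E ^^ n) x y)"

definition ball_V :: "('v \<Rightarrow> 'v \<Rightarrow> bool) \<Rightarrow> 'v \<Rightarrow> nat \<Rightarrow> 'v set" where
  "ball_V E x0 n = {x. gdist E x0 x \<le> n}"

definition Omega_n :: "('v \<Rightarrow> 'v \<Rightarrow> bool) \<Rightarrow> 'v \<Rightarrow> nat \<Rightarrow> ('v \<Rightarrow> 'a) set" where
  "Omega_n E x0 n = PiE (ball_V E x0 n) (\<lambda>_. UNIV)"

definition proj_n :: "('v \<Rightarrow> 'v \<Rightarrow> bool) \<Rightarrow> 'v \<Rightarrow> nat \<Rightarrow> ('v \<Rightarrow> 'a) \<Rightarrow> ('v \<Rightarrow> 'a)" where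
  "proj_n E x0 n \<sigma> = restrict \<sigma> (ball_V E x0 n)"

definition proj_measure :: "('v \<Rightarrow> 'v \<Rightarrow> bool) \<Rightarrow> 'v \<Rightarrow> nat \<Rightarrow> ('v \<Rightarrow> 'a) measure \<Rightarrow> ('v \<Rightarrow> 'a) measure" where
  "proj_measure E x0 i \<nu> = distr \<nu> (count_space (Omega_n E x0 i)) (proj_n E x0 i)"

definition rho :: "(nat \<Rightarrow> 'v) \<Rightarrow> ('v \<Rightarrow> 'a) \<Rightarrow> ('v \<Rightarrow> 'a) \<Rightarrow> real" where
  "rho enum \<sigma> \<sigma>' = (\<Sum>n. (1/2) ^ n * (if \<sigma> (enum n) \<noteq> \<sigma>' (enum n) then 1 else 0))"

definition rho_open :: "(nat \<Rightarrow> 'v) \<Rightarrow> ('v \<Rightarrow> 'a) set \<Rightarrow> bool" where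
  "rho_open enum U \<longleftrightarrow> (\<forall>\<sigma>\<in>U. \<exists>e>0. \<forall>\<sigma>'. rho enum \<sigma> \<sigma>' < e \<longrightarrow> \<sigma>' \<in> U)"

definition Omega_Borel :: "(nat \<Rightarrow> 'v) \<Rightarrow> ('v \<Rightarrow> 'a) measure" where
  "Omega_Borel enum = sigma UNIV {U. rho_open enum U}"

end

theory Submission
  imports Defs "HOL-Probability.Probability"
begin

text \<open>The \<open>\<rho>\<close>-Borel sets are
  generated by the \<open>\<inter>\<close>-stable family of cylinders \<open>\<pi> n -` B\<close>; since \<open>\<Omega> n0\<close> is countable and
  \<open>\<mu> n0\<close> is \<open>\<sigma>\<close>-finite, the cylinders over the points of \<open>\<Omega> n0\<close> form a countable cover by sets
  of finite measure, which gives uniqueness.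
  For existence take \<open>h > 0\<close> on \<open>\<Omega> n0\<close> with \<open>T = \<integral>h d\<mu> n0 < \<infinity>\<close>. If \<open>T = 0\<close>, every \<open>\<mu> n\<close> with
  \<open>n \<ge> n0\<close> vanishes. Otherwise the densities \<open>h \<circ> \<pi> n0 / T\<close> turn the \<open>\<mu> n\<close>, \<open>n \<ge> n0\<close>, into a
  consistent family of probability measures; Kolmogorov's theorem extends it to \<open>\<Omega>\<close>, and the
  density \<open>T / h \<circ> \<pi> n0\<close> turns the extension into the required measure.\<close>

lemma finite_relpowp_reach:
  fixes E :: "'v \<Rightarrow> 'v \<Rightarrow> bool"
  assumes "\<And>x. finite {y. E x y}"
  shows "finite {x. (E ^^ m) x0 x}"
proof (induction m)
  case (Suc m)
  have "{x. (E ^^ Suc m) x0 x} \<subseteq> (\<Union>y\<in>{x. (E ^^ m) x0 x}. {z. E y z})"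
    by auto
  then show ?case
    using Suc assms by (meson finite_UN_I finite_subset)
qed simp

text \<open>Connectivity is essential: a vertex not reachable from \<open>x0\<close> has \<open>gdist E x0 x = 0\<close>
  (the \<open>LEAST\<close> of an empty predicate), so it would lie in every ball.\<close>
lemma finite_ball_V:
  assumes "\<And>x. finite {y. E x y}" and "\<And>x. E\<^sup>*\<^sup>* x0 x"
  shows "finite (ball_V E x0 n)"
proof -
  have "ball_V E x0 n \<subseteq> (\<Union>m\<le>n. {x. (E ^^ m) x0 x})"
  proof
    fix x assume "x \<in> ball_V E x0 n"
    moreover obtain m where "(E ^^ m) x0 x"
      using assms(2) by (metis rtranclp_imp_relpowp)
    then have "(E ^^ gdist E x0 x) x0 x"
      unfolding gdist_def by (rule LeastI)
    ultimately show "x \<in> (\<Union>m\<le>n. {x. (E ^^ m) x0 x})"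
      unfolding ball_V_def by auto
  qed
  then show ?thesis
    using finite_relpowp_reach[OF assms(1)] by (meson finite_UN_I finite_atMost finite_subset)
qed

lemma mono_ball_V: "mono (ball_V E x0)"
  unfolding ball_V_def by (intro monoI) auto

lemma UN_ball_V: "(\<Union>n. ball_V E x0 n) = UNIV"
  unfolding ball_V_def by auto

lemma summable_rho_terms:
  "summable (\<lambda>n. (1/2::real) ^ n * (if \<sigma> (enum n) \<noteq> \<sigma>' (enum n) then 1 else 0))"
  by (rule summable_comparison_test'[OF summable_geometric[of "1/2::real"], of 0]) auto

lemma rho_ge_if_differ:
  assumes "\<sigma> (enum i) \<noteq> \<sigma>' (enum i)"
  shows "(1/2) ^ i \<le> rho enum \<sigma> \<sigma>'"
  using sum_le_suminf[OF summable_rho_terms, of "{i}" \<sigma> enum \<sigma>'] assms by (simp add: rho_def)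

lemma rho_le_if_agree:
  assumes "\<forall>i\<le>N. \<sigma> (enum i) = \<sigma>' (enum i)"
  shows "rho enum \<sigma> \<sigma>' \<le> (1/2) ^ N"
proof -
  define f where "f n = (1/2::real) ^ n * (if \<sigma> (enum n) \<noteq> \<sigma>' (enum n) then 1 else 0)" for n
  have f: "summable f"
    unfolding f_def by (rule summable_rho_terms)
  have "rho enum \<sigma> \<sigma>' = (\<Sum>n. f (n + Suc N)) + (\<Sum>i<Suc N. f i)"
    unfolding rho_def f_def[symmetric] by (rule suminf_split_initial_segment[OF f])
  also have "(\<Sum>i<Suc N. f i) = 0"
    using assms by (auto simp: f_def)
  also have "(\<Sum>n. f (n + Suc N)) \<le> (\<Sum>n. (1/2) ^ Suc N * (1/2::real) ^ n)"
    by (intro suminf_le summable_ignore_initial_segment[OF f] summable_mult summable_geometric)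
      (auto simp: f_def power_add)
  also have "\<dots> = (1/2) ^ N"
    by (subst suminf_mult) (auto simp: suminf_geometric)
  finally show ?thesis by simp
qed

lemma rho_open_if_finitely_determined:
  assumes "surj enum" and "finite F"
    and "\<And>\<sigma> \<sigma>'. \<sigma> \<in> U \<Longrightarrow> (\<forall>v\<in>F. \<sigma>' v = \<sigma> v) \<Longrightarrow> \<sigma>' \<in> U"
  shows "rho_open enum U"
proof -
  obtain N where N: "\<forall>i\<in>inv enum ` F. i \<le> N"
    using assms(2) finite_nat_set_iff_bounded_le by (meson finite_imageI)
  then have F_enum: "v \<in> F \<Longrightarrow> \<exists>i\<le>N. v = enum i" for v
    using assms(1) by (metis image_eqI surj_f_inv_f)
  show ?thesis
    unfolding rho_open_def
  proof (intro ballI exI[of _ "(1/2)^N"] conjI allI impI)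
    fix \<sigma> \<sigma>' assume "\<sigma> \<in> U" and close: "rho enum \<sigma> \<sigma>' < (1/2) ^ N"
    have "\<sigma> (enum i) = \<sigma>' (enum i)" if "i \<le> N" for i
    proof (rule ccontr)
      assume "\<sigma> (enum i) \<noteq> \<sigma>' (enum i)"
      then have "(1/2::real) ^ i \<le> rho enum \<sigma> \<sigma>'"
        by (rule rho_ge_if_differ)
      moreover have "(1/2::real) ^ N \<le> (1/2) ^ i"
        using that by (intro power_decreasing) auto
      ultimately show False
        using close by simp
    qed
    then show "\<sigma>' \<in> U"
      using F_enum assms(3)[OF \<open>\<sigma> \<in> U\<close>] by metis
  qed simp
qed

definition prefix_cylinder :: "(nat \<Rightarrow> 'v) \<Rightarrow> nat \<Rightarrow> 'a list \<Rightarrow> ('v \<Rightarrow> 'a) set" where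
  "prefix_cylinder enum N xs = {\<sigma>. \<forall>i\<le>N. \<sigma> (enum i) = xs ! i}"

text \<open>Over a countable alphabet there are only countably many prefix cylinders, and every
  \<open>\<rho>\<close>-ball around \<open>\<sigma>\<close> contains the prefix cylinder of \<open>\<sigma>\<close> of a suitable length.\<close>
lemma rho_open_in_sigma_prefix_cylinders:
  fixes U :: "('v \<Rightarrow> 'a::countable) set"
  assumes "rho_open enum U"
  shows "U \<in> sigma_sets UNIV (range (\<lambda>(N, xs). prefix_cylinder enum N xs))"
proof -
  define C where "C = {prefix_cylinder enum N xs | N xs. prefix_cylinder enum N xs \<subseteq> U}"
  have "\<exists>c\<in>C. \<sigma> \<in> c" if "\<sigma> \<in> U" for \<sigma>
  proof -
    obtain e where e: "e > 0" "\<forall>\<sigma>'. rho enum \<sigma> \<sigma>' < e \<longrightarrow> \<sigma>' \<in> U"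
      using assms \<open>\<sigma> \<in> U\<close> unfolding rho_open_def by blast
    obtain N where N: "(1/2::real) ^ N < e"
      using real_arch_pow_inv[OF e(1), of "1/2"] by auto
    define xs where "xs = map (\<lambda>i. \<sigma> (enum i)) [0..<Suc N]"
    have xs: "i \<le> N \<Longrightarrow> xs ! i = \<sigma> (enum i)" for i
      unfolding xs_def by (subst nth_map) (auto simp del: upt_Suc)
    have "rho enum \<sigma> \<sigma>' < e" if "\<forall>i\<le>N. \<sigma>' (enum i) = \<sigma> (enum i)" for \<sigma>'
      using rho_le_if_agree[of N \<sigma> enum \<sigma>'] that N by simp
    then have "prefix_cylinder enum N xs \<subseteq> U"
      using e(2) xs by (auto simp: prefix_cylinder_def)
    moreover have "\<sigma> \<in> prefix_cylinder enum N xs"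
      using xs by (simp add: prefix_cylinder_def)
    ultimately show ?thesis
      unfolding C_def by blast
  qed
  then have "U = \<Union>C"
    unfolding C_def by blast
  also have "\<Union>C \<in> sigma_sets UNIV (range (\<lambda>(N, xs). prefix_cylinder enum N xs))"
  proof (rule sigma_algebra.countable_Union[OF sigma_algebra_sigma_sets])
    show "countable C"
      by (rule countable_subset[of _ "range (\<lambda>(N, xs). prefix_cylinder enum N xs)"])
        (auto simp: C_def)
  qed (auto simp: C_def)
  finally show ?thesis .
qed

lemma measurable_Pow_sets:
  assumes "sets M = Pow A"
  shows "f \<in> measurable M N \<longleftrightarrow> f \<in> A \<rightarrow> space N"
  using measurable_cong_sets[of M "count_space A" N N] assms by (simp add: measurable_count_space_eq1)

lemma emeasure_singleton_neq_top:
  assumes "sigma_finite_measure M" and "{x} \<in> sets M"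
  shows "emeasure M {x} \<noteq> \<infinity>"
proof -
  obtain C where C: "countable C" "C \<subseteq> sets M" "\<Union>C = space M" "\<forall>c\<in>C. emeasure M c \<noteq> \<infinity>"
    using sigma_finite_measure.sigma_finite_countable[OF assms(1)] by blast
  moreover have "x \<in> space M"
    using sets.sets_into_space[OF assms(2)] by simp
  ultimately obtain c where "c \<in> C" "x \<in> c"
    by blast
  then have "emeasure M {x} \<le> emeasure M c"
    using C(2) by (intro emeasure_mono) auto
  then show ?thesis
    using C(4) \<open>c \<in> C\<close> by (auto simp: top_unique)
qed

locale finite_exhaustion =
  fixes V :: "nat \<Rightarrow> 'v set"
  assumes finite_V: "\<And>n. finite (V n)"
    and mono_V: "mono V"
    and UN_V: "(\<Union>n. V n) = UNIV"
begin

abbreviation \<Omega> :: "nat \<Rightarrow> ('v \<Rightarrow> 'a) set" where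
  "\<Omega> n \<equiv> PiE (V n) (\<lambda>_. UNIV)"

abbreviation \<pi> :: "nat \<Rightarrow> ('v \<Rightarrow> 'a) \<Rightarrow> 'v \<Rightarrow> 'a" where
  "\<pi> n \<sigma> \<equiv> restrict \<sigma> (V n)"

definition cylinders :: "('v \<Rightarrow> 'a) set set" where
  "cylinders = {\<pi> n -` B | n B. True}"

lemma finite_subset_V:
  assumes "finite F"
  obtains n where "k \<le> n" "F \<subseteq> V n"
proof -
  have "eventually (\<lambda>n. x \<in> V n) sequentially" for x
  proof -
    obtain m where "x \<in> V m"
      using UN_V by blast
    then show ?thesis
      using mono_V by (auto simp: eventually_sequentially mono_def)
  qed
  then have "eventually (\<lambda>n. \<forall>x\<in>F. x \<in> V n) sequentially"
    by (intro eventually_ball_finite[OF assms]) blast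
  then obtain N where "\<forall>n\<ge>N. F \<subseteq> V n"
    by (auto simp: eventually_sequentially subset_eq)
  then show ?thesis
    using that[of "max k N"] by simp
qed

lemma restrict_V_restrict_V: "n \<le> m \<Longrightarrow> \<pi> n (\<pi> m \<sigma>) = \<pi> n \<sigma>"
  using mono_V by (auto simp: mono_def restrict_def fun_eq_iff)

lemma countable_\<Omega>: "countable (\<Omega> n :: ('v \<Rightarrow> 'a::countable) set)"
  by (intro countable_PiE finite_V) auto

lemma vimage_restrict_V_in_cylinders: "\<pi> n -` B \<in> cylinders"
  unfolding cylinders_def by blast

lemma Int_stable_cylinders: "Int_stable (cylinders :: ('v \<Rightarrow> 'a) set set)"
proof (rule Int_stableI)
  fix a b :: "('v \<Rightarrow> 'a) set" assume "a \<in> cylinders" "b \<in> cylinders"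
  then obtain n m B C where "a = \<pi> n -` B" "b = \<pi> m -` C"
    unfolding cylinders_def by blast
  then have "a \<inter> b = \<pi> (max n m) -` (\<pi> n -` B \<inter> \<pi> m -` C)"
    using restrict_V_restrict_V[of n "max n m"] restrict_V_restrict_V[of m "max n m"]
    by (auto simp del: restrict_restrict)
  then show "a \<inter> b \<in> cylinders"
    by (metis vimage_restrict_V_in_cylinders)
qed

lemma sets_Omega_Borel:
  assumes "surj enum"
  shows "sets (Omega_Borel enum) = sigma_sets UNIV (cylinders :: ('v \<Rightarrow> 'a::countable) set set)"
proof -
  have "prefix_cylinder enum N xs \<in> cylinders" for N and xs :: "'a list"
  proof -
    obtain n where "enum ` {..N} \<subseteq> V n"
      using finite_subset_V[of "enum ` {..N}"] by blast
    then have "prefix_cylinder enum N xs = \<pi> n -` {f. \<forall>i\<le>N. f (enum i) = xs ! i}"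
      unfolding prefix_cylinder_def by auto
    also have "\<dots> \<in> cylinders"
      by (rule vimage_restrict_V_in_cylinders)
    finally show ?thesis .
  qed
  then have "sigma_sets UNIV (range (\<lambda>(N, xs). prefix_cylinder enum N xs))
      \<subseteq> sigma_sets UNIV (cylinders :: ('v \<Rightarrow> 'a) set set)"
    by (intro sigma_sets_mono') auto
  then have open_in: "rho_open enum U \<Longrightarrow> U \<in> sigma_sets UNIV cylinders" for U :: "('v \<Rightarrow> 'a) set"
    using rho_open_in_sigma_prefix_cylinders by blast
  have cylinder_open: "rho_open enum (\<pi> n -` B)" for n and B :: "('v \<Rightarrow> 'a) set"
  proof (rule rho_open_if_finitely_determined[OF assms finite_V])
    fix \<sigma> \<sigma>' assume "\<sigma> \<in> \<pi> n -` B" "\<forall>v\<in>V n. \<sigma>' v = \<sigma> v"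
    then show "\<sigma>' \<in> \<pi> n -` B"
      by (metis restrict_ext vimage_eq)
  qed
  have "sets (Omega_Borel enum) = sigma_sets UNIV {U :: ('v \<Rightarrow> 'a) set. rho_open enum U}"
    unfolding Omega_Borel_def by (rule sets_measure_of) auto
  also have "\<dots> = sigma_sets UNIV cylinders"
  proof (rule sigma_sets_eqI)
    show "U \<in> sigma_sets UNIV {U. rho_open enum U}" if "U \<in> cylinders" for U :: "('v \<Rightarrow> 'a) set"
      using that cylinder_open unfolding cylinders_def by blast
  qed (rule open_in, simp)
  finally show ?thesis .
qed

lemma space_eq_UNIV_if_sets_cylinders:
  assumes "sets M = sigma_sets UNIV (cylinders :: ('v \<Rightarrow> 'a) set set)"
  shows "space M = UNIV"
  using sets_eq_imp_space_eq[of M "sigma UNIV cylinders"] assms by (simp add: sets_measure_of)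

lemma measurable_restrict_V:
  assumes "sets M = sigma_sets UNIV (cylinders :: ('v \<Rightarrow> 'a) set set)"
  shows "\<pi> n \<in> measurable M (count_space (\<Omega> n))"
  using assms space_eq_UNIV_if_sets_cylinders[OF assms]
  by (intro measurableI) (auto intro: vimage_restrict_V_in_cylinders)

lemma emeasure_vimage_restrict_V:
  assumes "sets M = sigma_sets UNIV (cylinders :: ('v \<Rightarrow> 'a) set set)"
  shows "emeasure M (\<pi> n -` B) = emeasure (distr M (count_space (\<Omega> n)) (\<pi> n)) (B \<inter> \<Omega> n)"
  using space_eq_UNIV_if_sets_cylinders[OF assms]
  by (subst emeasure_distr[OF measurable_restrict_V[OF assms]]) (auto intro!: arg_cong[where f="emeasure M"])

lemma distr_restrict_V_restrict_V:
  assumes "n \<le> m" and "\<pi> m \<in> measurable M (count_space (\<Omega> m))"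
  shows "distr (distr M (count_space (\<Omega> m)) (\<pi> m)) (count_space (\<Omega> n)) (\<pi> n)
    = distr M (count_space (\<Omega> n)) (\<pi> n)"
  by (subst distr_distr[OF _ assms(2)])
    (auto simp: comp_def restrict_V_restrict_V[OF assms(1)] simp del: restrict_restrict)

lemma distr_restrict_V_self:
  assumes "sets M = Pow (\<Omega> n)"
  shows "distr M (count_space (\<Omega> n)) (\<pi> n) = M"
proof -
  have "distr M (count_space (\<Omega> n)) (\<pi> n) = distr M (count_space (\<Omega> n)) (\<lambda>f. f)"
    using sets_eq_imp_space_eq[of M "count_space (\<Omega> n)"] assms
    by (intro distr_cong) (auto simp: PiE_def extensional_def restrict_def fun_eq_iff)
  also have "\<dots> = M"
    using assms by (simp add: distr_id2)
  finally show ?thesis .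
qed

lemma emeasure_distr_restrict_V_\<Omega>:
  assumes "sets M = Pow (\<Omega> n)" and "m \<le> n"
  shows "emeasure (distr M (count_space (\<Omega> m)) (\<pi> m)) (\<Omega> m) = emeasure M (\<Omega> n)"
proof -
  have "\<pi> m -` \<Omega> m \<inter> space M = \<Omega> n"
    using sets_eq_imp_space_eq[of M "count_space (\<Omega> n)"] assms(1) by auto
  then show ?thesis
    by (subst emeasure_distr) (simp_all add: measurable_Pow_sets[OF assms(1)])
qed

lemma distr_density_restrict_V:
  assumes "m \<le> n" and "\<pi> n \<in> measurable M (count_space (\<Omega> n))"
  shows "distr (density M (\<lambda>\<sigma>. g (\<pi> m \<sigma>))) (count_space (\<Omega> n)) (\<pi> n)
    = density (distr M (count_space (\<Omega> n)) (\<pi> n)) (\<lambda>f. g (\<pi> m f))"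
  using density_distr[of "\<lambda>f. g (\<pi> m f)" "count_space (\<Omega> n)" "\<pi> n" M] assms
  by (simp add: restrict_V_restrict_V[OF assms(1)] del: restrict_restrict)

lemma measure_eq_if_marginals_eq:
  fixes M N :: "('v \<Rightarrow> 'a::countable) measure"
  assumes M: "sets M = sigma_sets UNIV cylinders" and N: "sets N = sigma_sets UNIV cylinders"
    and marginals: "\<And>n. distr M (count_space (\<Omega> n)) (\<pi> n) = distr N (count_space (\<Omega> n)) (\<pi> n)"
    and "sigma_finite_measure (distr M (count_space (\<Omega> m)) (\<pi> m))"
  shows "M = N"
proof -
  let ?A = "(\<lambda>\<omega>. \<pi> m -` {\<omega>}) ` (\<Omega> m :: ('v \<Rightarrow> 'a) set)"
  show ?thesis
  proof (rule measure_eqI_generator_eq_countable[OF Int_stable_cylinders _ _ M N, of ?A])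
    show "emeasure M X = emeasure N X" if X: "X \<in> cylinders" for X
    proof -
      obtain n B where "X = \<pi> n -` B"
        using X unfolding cylinders_def by blast
      then show ?thesis
        using emeasure_vimage_restrict_V[OF M] emeasure_vimage_restrict_V[OF N] marginals by simp
    qed
    show "?A \<subseteq> cylinders"
      using vimage_restrict_V_in_cylinders by blast
    have "\<sigma> \<in> \<pi> m -` {\<pi> m \<sigma>}" "\<pi> m \<sigma> \<in> \<Omega> m" for \<sigma> :: "'v \<Rightarrow> 'a"
      by auto
    then show "\<Union> ?A = UNIV"
      by blast
    show "countable ?A"
      by (intro countable_image countable_\<Omega>)
    show "emeasure M a \<noteq> \<infinity>" if a: "a \<in> ?A" for a
    proof -
      obtain \<omega> where "a = \<pi> m -` {\<omega>}" "\<omega> \<in> \<Omega> m"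
        using a by (rule imageE)
      then show ?thesis
        using emeasure_vimage_restrict_V[OF M, of m "{\<omega>}"]
          emeasure_singleton_neq_top[OF assms(4), of \<omega>] by simp
    qed
  qed (simp_all add: cylinders_def)
qed

end

lemma sets_PiM_borel_discrete:
  assumes "finite J"
  shows "sets (PiM J (\<lambda>_. borel :: ('a::countable) discrete measure)) = Pow (PiE J (\<lambda>_. UNIV))"
proof (intro antisym subsetI)
  fix A assume "A \<in> sets (PiM J (\<lambda>_. borel :: 'a discrete measure))"
  then show "A \<in> Pow (PiE J (\<lambda>_. UNIV))"
    using sets.sets_into_space by (fastforce simp: space_PiM)
next
  fix A assume A: "A \<in> Pow (PiE J (\<lambda>_. UNIV :: 'a discrete set))"
  show "A \<in> sets (PiM J (\<lambda>_. borel :: 'a discrete measure))"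
  proof (rule sets.countable)
    show "countable A"
      using A assms by (intro countable_subset[OF _ countable_PiE]) auto
    fix a assume "a \<in> A"
    then have "a \<in> extensional J"
      using A by (auto simp: PiE_def)
    then have "{a} = PiE J (\<lambda>i. {a i})"
      by (simp add: PiE_singleton)
    also have "\<dots> \<in> sets (PiM J (\<lambda>_. borel :: 'a discrete measure))"
      using assms by (intro sets_PiM_I_finite) (auto simp: sets_borel_eq_count_space)
    finally show "{a} \<in> sets (PiM J (\<lambda>_. borel :: 'a discrete measure))" .
  qed
qed

text \<open>The library's Kolmogorov extension theorem is stated for Polish coordinate spaces, so the
  values are transported to \<open>'a discrete\<close>; the marginal on a finite \<open>J\<close> is read off any \<open>Q n\<close>
  with \<open>J \<subseteq> V n\<close>, which is independent of \<open>n\<close> by consistency.\<close>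
locale consistent_prob_family = finite_exhaustion V for V :: "nat \<Rightarrow> 'v set" +
  fixes Q :: "nat \<Rightarrow> ('v \<Rightarrow> 'a::countable) measure" and m :: nat
  assumes sets_Q: "\<And>n. m \<le> n \<Longrightarrow> sets (Q n) = Pow (\<Omega> n)"
    and prob_space_Q: "\<And>n. m \<le> n \<Longrightarrow> prob_space (Q n)"
    and consistent_Q: "\<And>i j. m \<le> i \<Longrightarrow> i \<le> j \<Longrightarrow> distr (Q j) (count_space (\<Omega> i)) (\<pi> i) = Q i"
begin

definition to_discrete :: "'v set \<Rightarrow> ('v \<Rightarrow> 'a) \<Rightarrow> 'v \<Rightarrow> 'a discrete" where
  "to_discrete J f = restrict (\<lambda>v. discrete (f v)) J"

definition of_discrete_fun :: "('v \<Rightarrow> 'a discrete) \<Rightarrow> 'v \<Rightarrow> 'a" where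
  "of_discrete_fun g = (\<lambda>v. of_discrete (g v))"

definition marginal :: "'v set \<Rightarrow> ('v \<Rightarrow> 'a discrete) measure" where
  "marginal J = distr (Q (SOME n. m \<le> n \<and> J \<subseteq> V n)) (PiM J (\<lambda>_. borel)) (to_discrete J)"

lemma to_discrete_in_space: "to_discrete J f \<in> space (PiM J (\<lambda>_. borel))"
  by (simp add: to_discrete_def space_PiM)

lemma measurable_to_discrete:
  "m \<le> n \<Longrightarrow> to_discrete J \<in> measurable (Q n) (PiM J (\<lambda>_. borel))"
  by (simp add: measurable_Pow_sets[OF sets_Q] to_discrete_in_space)

lemma distr_to_discrete_eq:
  assumes "m \<le> n" "n \<le> n'" "J \<subseteq> V n"
  shows "distr (Q n') (PiM J (\<lambda>_. borel)) (to_discrete J) = distr (Q n) (PiM J (\<lambda>_. borel)) (to_discrete J)"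
proof -
  have "to_discrete J \<in> measurable (count_space (\<Omega> n)) (PiM J (\<lambda>_. borel))"
    by (simp add: to_discrete_in_space)
  moreover have "\<pi> n \<in> measurable (Q n') (count_space (\<Omega> n))"
    using assms(1,2) by (simp add: measurable_Pow_sets[OF sets_Q])
  ultimately have "distr (Q n) (PiM J (\<lambda>_. borel)) (to_discrete J)
      = distr (Q n') (PiM J (\<lambda>_. borel)) (to_discrete J \<circ> \<pi> n)"
    unfolding consistent_Q[OF assms(1,2), symmetric] by (rule distr_distr)
  also have "\<dots> = distr (Q n') (PiM J (\<lambda>_. borel)) (to_discrete J)"
    using assms(3) by (intro distr_cong) (auto simp: to_discrete_def restrict_def fun_eq_iff)
  finally show ?thesis ..
qed

lemma marginal_eq:
  assumes "m \<le> n" "J \<subseteq> V n"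
  shows "marginal J = distr (Q n) (PiM J (\<lambda>_. borel)) (to_discrete J)"
proof -
  define k where "k = (SOME n. m \<le> n \<and> J \<subseteq> V n)"
  have k: "m \<le> k" "J \<subseteq> V k"
    unfolding k_def using someI[of "\<lambda>n. m \<le> n \<and> J \<subseteq> V n", OF conjI[OF assms]] by auto
  have "marginal J = distr (Q (max n k)) (PiM J (\<lambda>_. borel)) (to_discrete J)"
    unfolding marginal_def k_def[symmetric] using k by (intro distr_to_discrete_eq[symmetric]) auto
  also have "\<dots> = distr (Q n) (PiM J (\<lambda>_. borel)) (to_discrete J)"
    using assms by (intro distr_to_discrete_eq) auto
  finally show ?thesis .
qed

lemma marginal_restrict:
  assumes "J \<subseteq> H" "finite H"
  shows "marginal J = distr (marginal H) (PiM J (\<lambda>_. borel)) (\<lambda>f. restrict f J)"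
proof -
  obtain n where n: "m \<le> n" "H \<subseteq> V n"
    using assms(2) by (rule finite_subset_V)
  have "distr (marginal H) (PiM J (\<lambda>_. borel)) (\<lambda>f. restrict f J)
      = distr (Q n) (PiM J (\<lambda>_. borel)) ((\<lambda>f. restrict f J) \<circ> to_discrete H)"
    unfolding marginal_eq[OF n]
    by (intro distr_distr measurable_restrict_subset assms(1) measurable_to_discrete n(1))
  also have "\<dots> = marginal J"
    using n assms
    by (subst marginal_eq[of n J]) (auto intro!: distr_cong simp: to_discrete_def Int_absorb1)
  finally show ?thesis ..
qed

lemma prob_space_marginal:
  assumes "finite J"
  shows "prob_space (marginal J)"
proof -
  obtain n where "m \<le> n" "J \<subseteq> V n"
    using assms by (rule finite_subset_V)
  then show ?thesis
    by (simp add: marginal_eq prob_space.prob_space_distr prob_space_Q measurable_to_discrete)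
qed

lemma projective_family_marginal: "projective_family UNIV marginal (\<lambda>_. borel)"
  by (intro projective_family.intro marginal_restrict prob_space_marginal)

sublocale kolmogorov: polish_projective UNIV marginal
  unfolding polish_projective_def by (rule projective_family_marginal)

lemma distr_lim_restrict:
  assumes "finite J"
  shows "distr kolmogorov.lim (PiM J (\<lambda>_. borel)) (\<lambda>g. restrict g J) = marginal J"
proof (rule measure_eqI)
  fix X assume "X \<in> sets (distr kolmogorov.lim (PiM J (\<lambda>_. borel)) (\<lambda>g. restrict g J))"
  then have X: "X \<in> sets (PiM J (\<lambda>_. borel))"
    by simp
  have "(\<lambda>g. restrict g J) -` X \<inter> space kolmogorov.lim = prod_emb UNIV (\<lambda>_. borel) J X"
    by (simp add: prod_emb_def space_PiM)
  then show "emeasure (distr kolmogorov.lim (PiM J (\<lambda>_. borel)) (\<lambda>g. restrict g J)) X = emeasure (marginal J) X"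
    using kolmogorov.emeasure_lim_emb[OF _ assms X] X
    by (subst emeasure_distr) (auto simp: measurable_cong_sets[OF kolmogorov.sets_lim refl])
qed (simp add: kolmogorov.sets_P[OF assms])

lemma restrict_of_discrete_fun_restrict:
  "\<pi> n (of_discrete_fun (restrict g (V n))) = \<pi> n (of_discrete_fun g)"
  by (simp add: of_discrete_fun_def restrict_def fun_eq_iff)

lemma measurable_of_discrete_fun:
  "of_discrete_fun \<in> measurable kolmogorov.lim (sigma UNIV cylinders)"
proof (rule measurable_measure_of)
  fix Y :: "('v \<Rightarrow> 'a) set" assume "Y \<in> cylinders"
  then obtain n B where Y: "Y = \<pi> n -` B"
    unfolding cylinders_def by blast
  define R where "R = {r \<in> PiE (V n) (\<lambda>_. UNIV). \<pi> n (of_discrete_fun r) \<in> B}"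
  have "R \<in> sets (PiM (V n) (\<lambda>_. borel))"
    unfolding sets_PiM_borel_discrete[OF finite_V] R_def by auto
  then have "(\<lambda>g. restrict g (V n)) -` R \<inter> space kolmogorov.lim \<in> sets kolmogorov.lim"
    by (rule measurable_sets[rotated])
      (simp add: measurable_cong_sets[OF kolmogorov.sets_lim refl] measurable_restrict_subset)
  moreover have "of_discrete_fun -` Y \<inter> space kolmogorov.lim
      = (\<lambda>g. restrict g (V n)) -` R \<inter> space kolmogorov.lim"
    unfolding Y R_def by (auto simp: space_PiM restrict_of_discrete_fun_restrict simp del: restrict_apply)
  ultimately show "of_discrete_fun -` Y \<inter> space kolmogorov.lim \<in> sets kolmogorov.lim"
    by simp
qed auto

lemma exists_extension:
  "\<exists>M. sets M = sigma_sets UNIV cylinders \<and> (\<forall>n\<ge>m. distr M (count_space (\<Omega> n)) (\<pi> n) = Q n)"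
proof (intro exI conjI allI impI)
  let ?M = "distr kolmogorov.lim (sigma UNIV cylinders) of_discrete_fun"
  show "sets ?M = sigma_sets UNIV cylinders"
    by (simp add: sets_measure_of)
  fix n assume "m \<le> n"
  have "distr ?M (count_space (\<Omega> n)) (\<pi> n)
      = distr kolmogorov.lim (count_space (\<Omega> n)) (\<lambda>g. \<pi> n (of_discrete_fun (restrict g (V n))))"
    by (subst distr_distr[OF _ measurable_of_discrete_fun])
      (auto intro!: distr_cong measurable_restrict_V simp: sets_measure_of comp_def of_discrete_fun_def)
  also have "\<dots> = distr (distr kolmogorov.lim (PiM (V n) (\<lambda>_. borel)) (\<lambda>g. restrict g (V n)))
      (count_space (\<Omega> n)) (\<lambda>r. \<pi> n (of_discrete_fun r))"
    by (subst distr_distr)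
      (auto simp: measurable_Pow_sets[OF sets_PiM_borel_discrete[OF finite_V]] comp_def
        measurable_cong_sets[OF kolmogorov.sets_lim refl] measurable_restrict_subset)
  also have "\<dots> = distr (Q n) (count_space (\<Omega> n)) (\<lambda>f. \<pi> n (of_discrete_fun (to_discrete (V n) f)))"
    unfolding distr_lim_restrict[OF finite_V] marginal_eq[OF \<open>m \<le> n\<close> order_refl]
    by (subst distr_distr)
      (auto simp: measurable_Pow_sets[OF sets_PiM_borel_discrete[OF finite_V]] comp_def
        measurable_to_discrete \<open>m \<le> n\<close>)
  also have "\<dots> = distr (Q n) (count_space (\<Omega> n)) (\<pi> n)"
    using \<open>m \<le> n\<close> by (intro distr_cong) (auto simp: of_discrete_fun_def to_discrete_def discrete_inverse)
  also have "\<dots> = Q n"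
    using \<open>m \<le> n\<close> by (simp add: distr_restrict_V_self sets_Q)
  finally show "distr ?M (count_space (\<Omega> n)) (\<pi> n) = Q n" .
qed

end

context finite_exhaustion
begin

lemma consistent_imp_consistent_le:
  assumes sets_\<mu>: "\<And>n. sets (\<mu> n) = Pow (\<Omega> n)"
    and consistent: "\<And>i j. i < j \<Longrightarrow> distr (\<mu> j) (count_space (\<Omega> i)) (\<pi> i) = \<mu> i"
    and "i \<le> j"
  shows "distr (\<mu> j) (count_space (\<Omega> i)) (\<pi> i) = \<mu> i"
  using assms(3) consistent[of i j] distr_restrict_V_self[OF sets_\<mu>] by (cases "i = j") auto

lemma exists_extension_null:
  fixes \<mu> :: "nat \<Rightarrow> ('v \<Rightarrow> 'a) measure"
  assumes sets_\<mu>: "\<And>n. sets (\<mu> n) = Pow (\<Omega> n)"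
    and consistent: "\<And>i j. i < j \<Longrightarrow> distr (\<mu> j) (count_space (\<Omega> i)) (\<pi> i) = \<mu> i"
    and null: "emeasure (\<mu> m) (\<Omega> m) = 0"
  shows "\<exists>M. sets M = sigma_sets UNIV cylinders \<and> (\<forall>n\<ge>m. distr M (count_space (\<Omega> n)) (\<pi> n) = \<mu> n)"
proof (intro exI conjI allI impI)
  let ?M = "null_measure (sigma UNIV (cylinders :: ('v \<Rightarrow> 'a) set set))"
  show "sets ?M = sigma_sets UNIV cylinders"
    by (simp add: sets_measure_of)
  fix n assume "m \<le> n"
  then have "emeasure (\<mu> n) (\<Omega> n) = 0"
    using consistent_imp_consistent_le[OF sets_\<mu> consistent \<open>m \<le> n\<close>]
      emeasure_distr_restrict_V_\<Omega>[OF sets_\<mu> \<open>m \<le> n\<close>] null by simp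
  then show "distr ?M (count_space (\<Omega> n)) (\<pi> n) = \<mu> n"
    using emeasure_mono[of _ "\<Omega> n" "\<mu> n"]
    by (intro measure_eqI) (auto simp: sets_\<mu> emeasure_distr measurable_restrict_V sets_measure_of)
qed

lemma consistent_prob_family_density:
  assumes sets_\<mu>: "\<And>n. sets (\<mu> n) = Pow (\<Omega> n)"
    and consistent: "\<And>i j. i < j \<Longrightarrow> distr (\<mu> j) (count_space (\<Omega> i)) (\<pi> i) = \<mu> i"
    and normalised: "(\<integral>\<^sup>+\<omega>. w \<omega> \<partial>\<mu> m) = 1"
  shows "consistent_prob_family V (\<lambda>n. density (\<mu> n) (\<lambda>f. w (\<pi> m f))) m"
proof (intro consistent_prob_family.intro finite_exhaustion_axioms consistent_prob_family_axioms.intro)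
  let ?Q = "\<lambda>n. density (\<mu> n) (\<lambda>f. w (\<pi> m f))"
  have space_\<mu>: "space (\<mu> n) = \<Omega> n" for n
    using sets_eq_imp_space_eq[of "\<mu> n" "count_space (\<Omega> n)"] sets_\<mu> by simp
  show distr_Q: "distr (?Q j) (count_space (\<Omega> i)) (\<pi> i) = ?Q i" if "m \<le> i" "i \<le> j" for i j
    using that distr_density_restrict_V[of m i "\<mu> j" w] consistent_imp_consistent_le[OF sets_\<mu> consistent]
    by (simp add: measurable_Pow_sets[OF sets_\<mu>])
  fix n assume "m \<le> n"
  show "sets (?Q n) = Pow (\<Omega> n)"
    by (simp add: sets_\<mu>)
  have "emeasure (?Q m) (\<Omega> m) = (\<integral>\<^sup>+\<omega>. w \<omega> \<partial>\<mu> m)"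
    by (subst emeasure_density)
      (auto simp: measurable_Pow_sets[OF sets_\<mu>] sets_\<mu> space_\<mu> intro!: nn_integral_cong)
  then have "emeasure (?Q n) (\<Omega> n) = 1"
    using distr_Q[OF order_refl \<open>m \<le> n\<close>] emeasure_distr_restrict_V_\<Omega>[of "?Q n" n m] \<open>m \<le> n\<close> normalised
    by (simp add: sets_\<mu>)
  then show "prob_space (?Q n)"
    by (intro prob_spaceI) (simp add: space_\<mu>)
qed

lemma distr_density_inverse_weight:
  assumes "sets \<Lambda> = sigma_sets UNIV cylinders" and "m \<le> n" and "sets M = Pow (\<Omega> n)"
    and marginal: "distr \<Lambda> (count_space (\<Omega> n)) (\<pi> n) = density M (\<lambda>f. w (\<pi> m f))"
    and inverse: "\<And>\<omega>. \<omega> \<in> \<Omega> m \<Longrightarrow> w \<omega> * w' \<omega> = 1"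
  shows "distr (density \<Lambda> (\<lambda>\<sigma>. w' (\<pi> m \<sigma>))) (count_space (\<Omega> n)) (\<pi> n) = M"
proof -
  have "distr (density \<Lambda> (\<lambda>\<sigma>. w' (\<pi> m \<sigma>))) (count_space (\<Omega> n)) (\<pi> n)
      = density (density M (\<lambda>f. w (\<pi> m f))) (\<lambda>f. w' (\<pi> m f))"
    using distr_density_restrict_V[OF assms(2) measurable_restrict_V[OF assms(1)], of w'] marginal
    by simp
  also have "\<dots> = density M (\<lambda>_. 1)"
    using inverse by (subst density_density_eq) (auto intro!: density_cong simp: measurable_Pow_sets[OF assms(3)])
  finally show ?thesis
    by (simp add: density_1)
qed

lemma exists_extension_sigma_finite:
  fixes \<mu> :: "nat \<Rightarrow> ('v \<Rightarrow> 'a::countable) measure"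
  assumes sets_\<mu>: "\<And>n. sets (\<mu> n) = Pow (\<Omega> n)"
    and consistent: "\<And>i j. i < j \<Longrightarrow> distr (\<mu> j) (count_space (\<Omega> i)) (\<pi> i) = \<mu> i"
    and "sigma_finite_measure (\<mu> m)"
  shows "\<exists>M. sets M = sigma_sets UNIV cylinders \<and> (\<forall>n\<ge>m. distr M (count_space (\<Omega> n)) (\<pi> n) = \<mu> n)"
proof -
  have space_\<mu>: "space (\<mu> m) = \<Omega> m"
    using sets_eq_imp_space_eq[of "\<mu> m" "count_space (\<Omega> m)"] sets_\<mu> by simp
  obtain h where h: "h \<in> borel_measurable (\<mu> m)" "integral\<^sup>N (\<mu> m) h \<noteq> \<infinity>"
    "\<And>\<omega>. \<omega> \<in> \<Omega> m \<Longrightarrow> 0 < h \<omega> \<and> h \<omega> < \<infinity>"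
    using sigma_finite_measure.Ex_finite_integrable_function[OF assms(3)] space_\<mu> by blast
  define T where "T = integral\<^sup>N (\<mu> m) h"
  show ?thesis
  proof (cases "T = 0")
    case True
    have "AE \<omega> in \<mu> m. h \<omega> = 0"
      using True h(1) unfolding T_def by (simp add: nn_integral_0_iff_AE)
    moreover have "AE \<omega> in \<mu> m. h \<omega> \<noteq> 0"
      using h(3) by (intro AE_I2) (force simp: space_\<mu>)
    ultimately have "AE \<omega> in \<mu> m. False"
      by eventually_elim simp
    then have "emeasure (\<mu> m) (\<Omega> m) = 0"
      using ae_filter_eq_bot_iff[of "\<mu> m"] by (simp add: eventually_False space_\<mu>)
    then show ?thesis
      using exists_extension_null[OF sets_\<mu> consistent] by blast
  next
    case False
    then have T: "0 < T" "T < \<infinity>"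
      using h(2) unfolding T_def by (auto simp: less_top zero_less_iff_neq_zero)
    have "(\<integral>\<^sup>+\<omega>. h \<omega> / T \<partial>\<mu> m) = 1"
      using T h(1) unfolding T_def by (simp add: nn_integral_divide ennreal_divide_self)
    then interpret consistent_prob_family V "\<lambda>n. density (\<mu> n) (\<lambda>f. h (\<pi> m f) / T)" m
      using consistent_prob_family_density[OF sets_\<mu> consistent, where w="\<lambda>\<omega>. h \<omega> / T"] by simp
    obtain \<Lambda> where \<Lambda>: "sets \<Lambda> = sigma_sets UNIV cylinders"
      "\<And>n. m \<le> n \<Longrightarrow> distr \<Lambda> (count_space (\<Omega> n)) (\<pi> n) = density (\<mu> n) (\<lambda>f. h (\<pi> m f) / T)"
      using exists_extension by blast
    have "h \<omega> / T * (T / h \<omega>) = 1" if "\<omega> \<in> \<Omega> m" for \<omega>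
    proof -
      have "0 < h \<omega>" "h \<omega> < \<infinity>"
        using h(3)[OF that] by auto
      then show ?thesis
        using T by (simp add: ennreal_divide_times ennreal_times_divide ennreal_divide_self)
    qed
    then have "distr (density \<Lambda> (\<lambda>\<sigma>. T / h (\<pi> m \<sigma>))) (count_space (\<Omega> n)) (\<pi> n) = \<mu> n"
      if "m \<le> n" for n
      using \<Lambda> that by (intro distr_density_inverse_weight[where w="\<lambda>\<omega>. h \<omega> / T"]) (auto simp: sets_\<mu>)
    then show ?thesis
      using \<Lambda>(1) by (intro exI[of _ "density \<Lambda> (\<lambda>\<sigma>. T / h (\<pi> m \<sigma>))"]) simp
  qed
qed

theorem unique_extension:
  fixes \<mu> :: "nat \<Rightarrow> ('v \<Rightarrow> 'a::countable) measure"
  assumes sets_\<mu>: "\<And>n. sets (\<mu> n) = Pow (\<Omega> n)"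
    and consistent: "\<And>i j. i < j \<Longrightarrow> distr (\<mu> j) (count_space (\<Omega> i)) (\<pi> i) = \<mu> i"
    and "sigma_finite_measure (\<mu> m)"
  shows "\<exists>!M. sets M = sigma_sets UNIV cylinders \<and> (\<forall>n. distr M (count_space (\<Omega> n)) (\<pi> n) = \<mu> n)"
proof (rule ex_ex1I)
  obtain M where M: "sets M = sigma_sets UNIV cylinders"
    and marginals: "\<And>n. m \<le> n \<Longrightarrow> distr M (count_space (\<Omega> n)) (\<pi> n) = \<mu> n"
    using exists_extension_sigma_finite[OF assms] by blast
  have "distr M (count_space (\<Omega> n)) (\<pi> n) = \<mu> n" for n
  proof (cases "m \<le> n")
    case False
    then have "distr M (count_space (\<Omega> n)) (\<pi> n)
        = distr (distr M (count_space (\<Omega> m)) (\<pi> m)) (count_space (\<Omega> n)) (\<pi> n)"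
      by (simp add: distr_restrict_V_restrict_V measurable_restrict_V[OF M])
    then show ?thesis
      using False consistent[of n m] marginals[of m] by simp
  qed (rule marginals)
  with M show "\<exists>M. sets M = sigma_sets UNIV cylinders \<and> (\<forall>n. distr M (count_space (\<Omega> n)) (\<pi> n) = \<mu> n)"
    by blast
next
  fix M N
  assume "sets M = sigma_sets UNIV cylinders \<and> (\<forall>n. distr M (count_space (\<Omega> n)) (\<pi> n) = \<mu> n)"
    and "sets N = sigma_sets UNIV cylinders \<and> (\<forall>n. distr N (count_space (\<Omega> n)) (\<pi> n) = \<mu> n)"
  then show "M = N"
    using assms(3) by (intro measure_eq_if_marginals_eq[of M N m]) auto
qed

end

theorem mainTheorem8:
  fixes k :: nat
    and E :: "'v \<Rightarrow> 'v \<Rightarrow> bool"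
    and enum :: "nat \<Rightarrow> 'v"
    and x0 :: 'v
    and \<mu> :: "nat \<Rightarrow> ('v \<Rightarrow> 'a::countable) measure"
    and n0 :: nat
  assumes "k \<ge> 1"
    and "cayley_tree k E"
    and "bij enum"
    and "\<And>n. sets (\<mu> n) = Pow (Omega_n E x0 n)"
    and "\<And>i j. i < j \<Longrightarrow> proj_measure E x0 i (\<mu> j) = \<mu> i"
    and "sigma_finite_measure (\<mu> n0)"
  shows "\<exists>!\<mu>bar. sets \<mu>bar = sets (Omega_Borel enum)
            \<and> (\<forall>n. proj_measure E x0 n \<mu>bar = \<mu> n)"
proof -
  have "\<And>x. finite {y. E x y}" "\<And>x. E\<^sup>*\<^sup>* x0 x"
    using assms(2) unfolding cayley_tree_def by auto
  then interpret finite_exhaustion "ball_V E x0"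
    by (intro finite_exhaustion.intro finite_ball_V mono_ball_V UN_ball_V)
  show ?thesis
    using unique_extension[of \<mu> n0] assms(4-6)
    unfolding sets_Omega_Borel[OF bij_is_surj[OF assms(3)]] proj_measure_def Omega_n_def proj_n_def
    by simp
qed

end
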